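(* Let $F(x)=\frac{1-x-\sqrt{1-2x-3x^2}}{2x^2}$ be the generating function of the Motzkin numbers. Then $D_{3,-3}(0)=1$, $D_{3,-3}(1)=D_{3,-3}(2)=D_{3,-3}(3)=0$, and for every integer $k\ge1$, $$D_{3,-3}(3k+1)=k,\qquad D_{3,-3}(3k+2)=0,\qquad D_{3,-3}(3k+3)=-k.$$
   Context: For a power series $F(x)=\sum_{n\ge0}a_nx^n$ and $K\ge1$, write $F(x)^K=\sum_{n\ge0}a_{K,n}x^n$ and set $a_{K,n}=0$ for $n<0$. For $M\in\mathbb{Z}$ and $K,N\in\mathbb{N}$ with $K\ge1$, define the shifted Hankel determinant $D_{K,M}(N)=\det(a_{K,i+j+M})_{i,j=0}^{N-1}$, with $D_{K,M}(0)=1$. *)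

theory Defs
  imports "HOL-Computational_Algebra.Formal_Power_Series" "Jordan_Normal_Form.Determinant"
begin

text \<open>Square root of a power series with constant term 1: the radical with the
  root of the constant term chosen as 1 (the principal branch used in the paper).\<close>
definition motzkin_gf :: "real fps" where
  "motzkin_gf = (1 - fps_X - fps_radical (\<lambda>_ _. 1) 2 (1 - 2 * fps_X - 3 * fps_X ^ 2))
                 / (2 * fps_X ^ 2)"

definition pow_coeff :: "real fps \<Rightarrow> nat \<Rightarrow> int \<Rightarrow> real" where
  "pow_coeff F K n = (if n < 0 then 0 else fps_nth (F ^ K) (nat n))"

definition hankel_det :: "real fps \<Rightarrow> nat \<Rightarrow> int \<Rightarrow> nat \<Rightarrow> real" where
  "hankel_det F K M N = det (mat N N (\<lambda>(i, j). pow_coeff F K (int i + int j + M)))"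

end

theory Submission
  imports Defs
begin

text \<open>The engine is Sulanke and Xin's quadratic transformation of Hankel determinants:
  if F V = x^d with V(0) \<noteq> 0, and the coefficients of V from degree d + 2 on are those of
  -x^(d+2) G, then row operations with the coefficients of V make the Hankel matrix of F block
  triangular, and H_N(F) = \<plusminus>V(0)^-(2N-d-1) H_(N-d-1)(G).

  The determinants D_(3,-3)(N) are the Hankel determinants of w = x^3 F^3, and cubing the
  Motzkin equation gives w (1 - 3x + 2x^3 - x^3 w) = x^3. One transformation passes from w to
  x F^3, another to a_1, where a_k = k^2 w - k(k + 1). This family reproduces itself: two
  transformations lead from a_k via b_k = x / d_k to a_(k+1), so H_(n+3)(a_k) is an explicit
  multiple of H_n(a_(k+1)), and induction on n, for all k at once, gives closed forms of period 3.\<close>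

definition hankel_mat :: "(nat \<Rightarrow> 'a) \<Rightarrow> nat \<Rightarrow> 'a mat" where
  "hankel_mat f n = mat n n (\<lambda>(i, j). f (i + j))"

lemma hankel_mat_carrier [simp]: "hankel_mat f n \<in> carrier_mat n n"
  by (simp add: hankel_mat_def)

lemma det_hankel_mat_0 [simp]: "det (hankel_mat f 0) = 1"
  by (simp add: hankel_mat_def)

lemma det_hankel_mat_1 [simp]: "det (hankel_mat f (Suc 0)) = f 0"
  by (subst det_single) (auto simp: hankel_mat_def)

lemma det_hankel_mat_first_row_zero:
  fixes f :: "nat \<Rightarrow> 'a :: comm_ring_1"
  assumes "0 < n" and "\<And>j. j < n \<Longrightarrow> f j = 0"
  shows "det (hankel_mat f n) = 0"
proof -
  have "det (hankel_mat f n) = (\<Sum>j<n. hankel_mat f n $$ (0, j) * cofactor (hankel_mat f n) 0 j)"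
    by (rule laplace_expansion_row) (use assms in auto)
  also have "\<dots> = 0"
    by (rule sum.neutral) (use assms in \<open>auto simp: hankel_mat_def\<close>)
  finally show ?thesis .
qed

lemma det_upper_anti_triangular:
  fixes A :: "'a :: comm_ring_1 mat"
  assumes "A \<in> carrier_mat n n"
    and "\<And>i j. i < n \<Longrightarrow> j < n \<Longrightarrow> i + j < n - 1 \<Longrightarrow> A $$ (i, j) = 0"
    and "\<And>i. i < n \<Longrightarrow> A $$ (i, n - 1 - i) = a"
  shows "det A = (-1) ^ (n * (n - 1) div 2) * a ^ n"
  using assms
proof (induction n arbitrary: A)
  case 0
  then show ?case by simp
next
  case (Suc m)
  note A = Suc.prems(1)
  have "det A = (\<Sum>j<Suc m. A $$ (0, j) * cofactor A 0 j)"
    by (rule laplace_expansion_row[OF A]) simp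
  also have "\<dots> = A $$ (0, m) * cofactor A 0 m"
    using Suc.prems(2) by (simp add: sum.neutral)
  also have "A $$ (0, m) = a"
    using Suc.prems(3)[of 0] by simp
  also have "cofactor A 0 m = (-1) ^ m * det (mat_delete A 0 m)"
    by (simp add: cofactor_def)
  also have "det (mat_delete A 0 m) = (-1) ^ (m * (m - 1) div 2) * a ^ m"
  proof (rule Suc.IH)
    show "mat_delete A 0 m \<in> carrier_mat m m"
      using mat_delete_carrier[OF A] by simp
  next
    fix i j assume "i < m" "j < m" "i + j < m - 1"
    then show "mat_delete A 0 m $$ (i, j) = 0"
      using A Suc.prems(2)[of "Suc i" j] by (auto simp: mat_delete_def)
  next
    fix i assume "i < m"
    then show "mat_delete A 0 m $$ (i, m - 1 - i) = a"
      using A Suc.prems(3)[of "Suc i"] by (auto simp: mat_delete_def Suc_diff_Suc)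
  qed
  finally have "det A = (-1) ^ (m + m * (m - 1) div 2) * a ^ Suc m"
    by (simp add: power_add)
  moreover have "m + m * (m - 1) div 2 = Suc m * (Suc m - 1) div 2"
    by (cases m) auto
  ultimately show ?case
    by simp
qed

lemma fps_nth_diff_X_power_mult:
  fixes p G :: "'a :: comm_ring_1 fps"
  assumes "\<And>k. m \<le> k \<Longrightarrow> fps_nth p k = 0" and "m \<le> k"
  shows "fps_nth (p - fps_X ^ m * G) k = - fps_nth G (k - m)"
  using assms by (simp add: fps_X_power_mult_nth)

locale hankel_quadratic_transformation =
  fixes F V G :: "'a :: field fps" and d :: nat
  assumes F_times_V: "F * V = fps_X ^ d"
    and V_0_nonzero: "fps_nth V 0 \<noteq> 0"
    and V_tail: "\<And>k. d + 2 \<le> k \<Longrightarrow> fps_nth V k = - fps_nth G (k - d - 2)"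
begin

lemma F_eq_X_power_mult_inverse: "F = fps_X ^ d * inverse V"
proof -
  have "F = F * (V * inverse V)"
    using V_0_nonzero by (simp add: inverse_mult_eq_1')
  also have "\<dots> = fps_X ^ d * inverse V"
    by (simp add: F_times_V mult.assoc[symmetric])
  finally show ?thesis .
qed

lemma F_nth_less: "n < d \<Longrightarrow> fps_nth F n = 0"
  by (subst F_eq_X_power_mult_inverse) (simp add: fps_X_power_mult_nth)

lemma F_nth_d: "fps_nth F d = inverse (fps_nth V 0)"
  by (subst F_eq_X_power_mult_inverse) (simp add: fps_X_power_mult_nth)

lemma V_F_convolution: "(\<Sum>k\<le>n. fps_nth V k * fps_nth F (n - k)) = (if n = d then 1 else 0)"
proof -
  have "fps_nth (V * F) n = fps_nth (fps_X ^ d) n"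
    by (simp add: F_times_V mult.commute)
  then show ?thesis
    by (simp add: fps_mult_nth atLeast0AtMost)
qed

text \<open>For i > d the coefficient of x^(i+j) in V F = x^d vanishes, so the first i + 1 terms of
  the convolution equal minus the remaining ones, which only involve the tail -G of V.\<close>
lemma V_row_times_hankel:
  assumes "d < i"
  shows "(\<Sum>l\<le>i. fps_nth V (i - l) * fps_nth F (l + j))
           = (\<Sum>r<j. fps_nth G (i - d - 1 + r) * fps_nth F (j - 1 - r))"
proof -
  have "(\<Sum>l\<le>i. fps_nth V (i - l) * fps_nth F (l + j)) = (\<Sum>k\<le>i. fps_nth V k * fps_nth F (i + j - k))"
    by (rule sum.reindex_bij_witness[of _ "\<lambda>k. i - k" "\<lambda>k. i - k"]) (auto simp: algebra_simps)
  also have "\<dots> = - (\<Sum>k\<in>{i<..i + j}. fps_nth V k * fps_nth F (i + j - k))"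
  proof -
    have "{..i + j} = {..i} \<union> {i<..i + j}" by auto
    then have "(\<Sum>k\<le>i + j. fps_nth V k * fps_nth F (i + j - k))
        = (\<Sum>k\<le>i. fps_nth V k * fps_nth F (i + j - k)) + (\<Sum>k\<in>{i<..i + j}. fps_nth V k * fps_nth F (i + j - k))"
      by (simp only:) (subst sum.union_disjoint, auto)
    moreover have "(\<Sum>k\<le>i + j. fps_nth V k * fps_nth F (i + j - k)) = 0"
      using V_F_convolution[of "i + j"] assms by simp
    ultimately show ?thesis
      by (simp add: eq_neg_iff_add_eq_0 add.commute)
  qed
  also have "(\<Sum>k\<in>{i<..i + j}. fps_nth V k * fps_nth F (i + j - k))
      = (\<Sum>r<j. fps_nth V (i + 1 + r) * fps_nth F (j - 1 - r))"
    by (rule sum.reindex_bij_witness[of _ "\<lambda>r. i + 1 + r" "\<lambda>k. k - i - 1"]) (auto simp: add.commute)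
  also have "\<dots> = (\<Sum>r<j. - fps_nth G (i - d - 1 + r) * fps_nth F (j - 1 - r))"
    using assms by (intro sum.cong refl) (simp add: V_tail)
  finally show ?thesis
    by (simp add: sum_negf)
qed

definition row_op_mat :: "nat \<Rightarrow> 'a mat" where
  "row_op_mat N = mat N N (\<lambda>(i, l).
     if i \<le> d then (if i = l then 1 else 0) else if l \<le> i then fps_nth V (i - l) else 0)"

definition toeplitz_F_mat :: "nat \<Rightarrow> 'a mat" where
  "toeplitz_F_mat n = mat n n (\<lambda>(r, j). if r \<le> j then fps_nth F (d + j - r) else 0)"

lemma row_op_mat_carrier [simp]: "row_op_mat N \<in> carrier_mat N N"
  by (simp add: row_op_mat_def)

lemma toeplitz_F_mat_carrier [simp]: "toeplitz_F_mat n \<in> carrier_mat n n"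
  by (simp add: toeplitz_F_mat_def)

lemma det_row_op_mat: "det (row_op_mat N) = fps_nth V 0 ^ (N - d - 1)"
proof -
  have "det (row_op_mat N) = prod_list (diag_mat (row_op_mat N))"
    by (rule det_lower_triangular[of N]) (auto simp: row_op_mat_def)
  also have "\<dots> = (\<Prod>i = 0..<N. if i \<le> d then 1 else fps_nth V 0)"
    unfolding prod_list_diag_prod by (intro prod.cong) (auto simp: row_op_mat_def)
  also have "\<dots> = (\<Prod>i\<in>{d + 1..<N}. fps_nth V 0)"
    by (rule prod.mono_neutral_cong_right) auto
  finally show ?thesis
    by simp
qed

lemma det_toeplitz_F_mat: "det (toeplitz_F_mat n) = inverse (fps_nth V 0) ^ n"
proof -
  have "det (toeplitz_F_mat n) = prod_list (diag_mat (toeplitz_F_mat n))"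
    by (rule det_upper_triangular) (auto simp: toeplitz_F_mat_def upper_triangular_def)
  then show ?thesis
    by (simp add: prod_list_diag_prod toeplitz_F_mat_def F_nth_d)
qed

lemma det_hankel_F_initial:
  "det (hankel_mat (fps_nth F) (d + 1)) = (-1) ^ ((d + 1) * d div 2) * inverse (fps_nth V 0) ^ (d + 1)"
  using det_upper_anti_triangular[of "hankel_mat (fps_nth F) (d + 1)" "d + 1"]
  by (auto simp: hankel_mat_def F_nth_less F_nth_d)

lemma row_op_mat_times_hankel_nth:
  assumes i: "i < N" and j: "j < N"
  shows "(row_op_mat N * hankel_mat (fps_nth F) N) $$ (i, j)
    = (if i \<le> d then fps_nth F (i + j) else (\<Sum>r<j. fps_nth G (i - d - 1 + r) * fps_nth F (j - 1 - r)))"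
proof -
  have "(row_op_mat N * hankel_mat (fps_nth F) N) $$ (i, j)
      = (\<Sum>l<N. row_op_mat N $$ (i, l) * hankel_mat (fps_nth F) N $$ (l, j))"
    using i j by (simp add: scalar_prod_def lessThan_atLeast0 row_op_mat_def hankel_mat_def)
  also have "\<dots> = (if i \<le> d then fps_nth F (i + j) else (\<Sum>l\<le>i. fps_nth V (i - l) * fps_nth F (l + j)))"
  proof (cases "i \<le> d")
    case True
    then have "(\<Sum>l<N. row_op_mat N $$ (i, l) * hankel_mat (fps_nth F) N $$ (l, j))
        = (\<Sum>l<N. if l = i then fps_nth F (i + j) else 0)"
      using i j by (intro sum.cong) (auto simp: row_op_mat_def hankel_mat_def)
    then show ?thesis
      using i True by simp
  next
    case False
    then have "(\<Sum>l<N. row_op_mat N $$ (i, l) * hankel_mat (fps_nth F) N $$ (l, j))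
        = (\<Sum>l\<in>{..<N}. if l \<in> {..i} then fps_nth V (i - l) * fps_nth F (l + j) else 0)"
      using i j by (intro sum.cong) (auto simp: row_op_mat_def hankel_mat_def)
    also have "\<dots> = (\<Sum>l\<in>{..<N} \<inter> {..i}. fps_nth V (i - l) * fps_nth F (l + j))"
      by (simp add: sum.inter_restrict)
    also have "{..<N} \<inter> {..i} = {..i}"
      using i by auto
    finally show ?thesis
      using False by simp
  qed
  finally show ?thesis
    by (simp add: V_row_times_hankel)
qed

lemma hankel_times_toeplitz_F_nth:
  assumes i: "i < n" and j: "j < n"
  shows "(hankel_mat (fps_nth G) n * toeplitz_F_mat n) $$ (i, j)
    = (\<Sum>r<d + 1 + j. fps_nth G (i + r) * fps_nth F (d + j - r))"
proof -
  have "(hankel_mat (fps_nth G) n * toeplitz_F_mat n) $$ (i, j)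
      = (\<Sum>r<n. fps_nth G (i + r) * (if r \<le> j then fps_nth F (d + j - r) else 0))"
    using i j by (simp add: hankel_mat_def toeplitz_F_mat_def scalar_prod_def lessThan_atLeast0)
  also have "\<dots> = (\<Sum>r<d + 1 + j. fps_nth G (i + r) * fps_nth F (d + j - r))"
  proof (rule sum.mono_neutral_cong)
    show "fps_nth G (i + r) * (if r \<le> j then fps_nth F (d + j - r) else 0) = 0"
      if "r \<in> {..<n} - {..<d + 1 + j}" for r
      using that by auto
    show "fps_nth G (i + r) * fps_nth F (d + j - r) = 0" if "r \<in> {..<d + 1 + j} - {..<n}" for r
      using that j by (auto simp: F_nth_less)
    show "fps_nth G (i + r) * (if r \<le> j then fps_nth F (d + j - r) else 0)
        = fps_nth G (i + r) * fps_nth F (d + j - r)"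
      if "r \<in> {..<n} \<inter> {..<d + 1 + j}" for r
      using that by (auto simp: F_nth_less)
  qed auto
  finally show ?thesis .
qed

lemma row_op_mat_times_hankel:
  assumes N: "N = d + 1 + n"
  shows "row_op_mat N * hankel_mat (fps_nth F) N
    = four_block_mat (hankel_mat (fps_nth F) (d + 1)) (mat (d + 1) n (\<lambda>(i, j). fps_nth F (i + j + d + 1)))
        (0\<^sub>m n (d + 1)) (hankel_mat (fps_nth G) n * toeplitz_F_mat n)"
    (is "_ = ?B")
proof (rule eq_matI)
  fix i j assume "i < dim_row ?B" "j < dim_col ?B"
  then have i: "i < N" and j: "j < N"
    by (simp_all add: N hankel_mat_def toeplitz_F_mat_def)
  have B: "?B $$ (i, j) = (if i \<le> d then fps_nth F (i + j) else if j \<le> d then 0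
      else (hankel_mat (fps_nth G) n * toeplitz_F_mat n) $$ (i - (d + 1), j - (d + 1)))"
    using i j by (subst index_mat_four_block) (auto simp: N hankel_mat_def toeplitz_F_mat_def simp del: index_mult_mat(1))
  show "(row_op_mat N * hankel_mat (fps_nth F) N) $$ (i, j) = ?B $$ (i, j)"
  proof (cases "d < i \<and> d < j")
    case True
    then obtain i' j' where ij: "i = d + 1 + i'" "j = d + 1 + j'"
      by (metis Suc_eq_plus1 add_Suc less_imp_Suc_add)
    have "(row_op_mat N * hankel_mat (fps_nth F) N) $$ (i, j)
        = (\<Sum>r<d + 1 + j'. fps_nth G (i' + r) * fps_nth F (d + j' - r))"
      using i j by (simp add: row_op_mat_times_hankel_nth ij)
    also have "\<dots> = (hankel_mat (fps_nth G) n * toeplitz_F_mat n) $$ (i', j')"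
      using i j by (simp add: hankel_times_toeplitz_F_nth ij N)
    also have "\<dots> = ?B $$ (i, j)"
      using True unfolding B by (simp add: ij)
    finally show ?thesis .
  next
    case False
    with i j show ?thesis
      unfolding B by (auto simp: row_op_mat_times_hankel_nth F_nth_less intro!: sum.neutral)
  qed
qed (simp_all add: N row_op_mat_def hankel_mat_def toeplitz_F_mat_def)

theorem det_hankel_transformation:
  assumes "d < N"
  shows "det (hankel_mat (fps_nth F) N)
    = (-1) ^ ((d + 1) * d div 2) * inverse (fps_nth V 0) ^ (2 * N - d - 1)
      * det (hankel_mat (fps_nth G) (N - d - 1))"
proof -
  define n where "n = N - d - 1"
  have N: "N = d + 1 + n"
    using assms by (simp add: n_def)
  let ?c = "fps_nth V 0"
  have "?c ^ n * det (hankel_mat (fps_nth F) N)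
      = det (row_op_mat N * hankel_mat (fps_nth F) N)"
    by (simp add: det_mult[of _ N] det_row_op_mat n_def)
  also have "\<dots> = det (hankel_mat (fps_nth F) (d + 1)) * det (hankel_mat (fps_nth G) n * toeplitz_F_mat n)"
    unfolding row_op_mat_times_hankel[OF N]
    by (rule det_four_block_mat_lower_left_zero[of _ "d + 1" _ n]) (auto intro!: mult_carrier_mat hankel_mat_carrier toeplitz_F_mat_carrier)
  also have "\<dots> = (-1) ^ ((d + 1) * d div 2) * inverse ?c ^ (d + 1 + n)
      * det (hankel_mat (fps_nth G) n)"
    unfolding det_mult[OF hankel_mat_carrier toeplitz_F_mat_carrier] det_toeplitz_F_mat
      det_hankel_F_initial by (simp add: power_add)
  finally have eq: "?c ^ n * det (hankel_mat (fps_nth F) N)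
      = (-1) ^ ((d + 1) * d div 2) * inverse ?c ^ (d + 1 + n) * det (hankel_mat (fps_nth G) n)" .
  have "det (hankel_mat (fps_nth F) N) = inverse ?c ^ n * (?c ^ n * det (hankel_mat (fps_nth F) N))"
    using V_0_nonzero by (simp add: field_simps)
  also have "\<dots> = (-1) ^ ((d + 1) * d div 2) * inverse ?c ^ (n + (d + 1 + n)) * det (hankel_mat (fps_nth G) n)"
    unfolding eq by (simp add: power_add ac_simps)
  also have "n + (d + 1 + n) = 2 * N - d - 1"
    by (simp add: N)
  finally show ?thesis
    by (simp add: n_def)
qed

end

lemma motzkin_radicand_radical_sq:
  "fps_radical (\<lambda>_ _. 1) 2 (1 - 2 * fps_X - 3 * fps_X ^ 2) ^ 2 = (1 - 2 * fps_X - 3 * fps_X ^ 2 :: real fps)"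
  using power_radical[of "1 - 2 * fps_X - 3 * fps_X ^ 2 :: real fps" "\<lambda>_ _. 1" 1]
  by (simp add: numeral_2_eq_2)

text \<open>The numerator of motzkin_gf has vanishing coefficients at 1 and x, so the division by
  2x^2 is exact.\<close>
lemma motzkin_gf_numerator:
  "1 - fps_X - fps_radical (\<lambda>_ _. 1) 2 (1 - 2 * fps_X - 3 * fps_X ^ 2) = 2 * fps_X ^ 2 * motzkin_gf"
proof -
  define R :: "real fps" where "R = fps_radical (\<lambda>_ _. 1) 2 (1 - 2 * fps_X - 3 * fps_X ^ 2)"
  have R_0: "fps_nth R 0 = 1"
    by (simp add: R_def)
  have "fps_nth (R ^ 2) 1 = -2"
    by (simp add: R_def motzkin_radicand_radical_sq)
  then have R_1: "fps_nth R 1 = -1"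
    using R_0 by (simp add: power2_eq_square fps_mult_nth_1)
  define h where "h = fps_shift 2 (1 - fps_X - R)"
  have numerator: "1 - fps_X - R = fps_X ^ 2 * h"
  proof (rule fps_ext)
    fix n
    show "fps_nth (1 - fps_X - R) n = fps_nth (fps_X ^ 2 * h) n"
    proof (cases "n < 2")
      case True
      then show ?thesis
        using R_0 R_1 by (auto simp: h_def fps_X_power_mult_nth less_2_cases_iff)
    next
      case False
      then have "n - 2 + 2 = n"
        by simp
      then show ?thesis
        using False by (simp add: h_def fps_X_power_mult_nth)
    qed
  qed
  have two: "2 * fps_const (1 / 2) = (1 :: real fps)"
    by (simp add: numeral_fps_const)
  have "1 - fps_X - R = fps_X ^ 2 * ((2 * fps_const (1 / 2)) * h)"
    by (simp add: numerator two)
  also have "\<dots> = (2 * fps_X ^ 2) * (fps_const (1 / 2) * h)"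
    by (simp only: mult_ac)
  finally have "motzkin_gf = (2 * fps_X ^ 2) * (fps_const (1 / 2) * h) / (2 * fps_X ^ 2)"
    by (simp only: motzkin_gf_def R_def[symmetric])
  also have "\<dots> = fps_const (1 / 2) * h"
    by (rule nonzero_mult_div_cancel_left) simp
  finally have motzkin_gf_eq: "motzkin_gf = fps_const (1 / 2) * h" .
  have "2 * fps_X ^ 2 * motzkin_gf = fps_X ^ 2 * ((2 * fps_const (1 / 2)) * h)"
    unfolding motzkin_gf_eq by (simp only: mult_ac)
  then show ?thesis
    by (simp add: two numerator flip: R_def)
qed

lemma motzkin_gf_equation: "fps_X ^ 2 * motzkin_gf ^ 2 - (1 - fps_X) * motzkin_gf + 1 = 0"
proof -
  have "(1 - fps_X - 2 * fps_X ^ 2 * motzkin_gf) ^ 2 = 1 - 2 * fps_X - 3 * fps_X ^ 2"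
    unfolding motzkin_gf_numerator[symmetric] by (simp add: motzkin_radicand_radical_sq)
  then have "(4 * fps_X ^ 2) * (fps_X ^ 2 * motzkin_gf ^ 2 - (1 - fps_X) * motzkin_gf + 1) = 0"
    by (simp add: algebra_simps power2_eq_square)
  then show ?thesis
    by simp
qed

definition X3_motzkin_cube :: "real fps" where
  "X3_motzkin_cube = fps_X ^ 3 * motzkin_gf ^ 3"

definition X_motzkin_cube :: "real fps" where
  "X_motzkin_cube = fps_X * motzkin_gf ^ 3"

definition cube_denom :: "real fps" where
  "cube_denom = 1 - 3 * fps_X + 2 * fps_X ^ 3 - fps_X ^ 3 * X3_motzkin_cube"

lemma X3_motzkin_cube_times_cube_denom: "X3_motzkin_cube * cube_denom = fps_X ^ 3"
proof -
  define q where "q = fps_X ^ 2 * motzkin_gf ^ 2 - (1 - fps_X) * motzkin_gf + 1"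
  define t where "t = fps_X ^ 2 * motzkin_gf ^ 2"
  define s where "s = (1 - fps_X) * motzkin_gf - 1"
  have "X3_motzkin_cube * cube_denom - fps_X ^ 3
      + fps_X ^ 3 * q * (3 * (1 - fps_X) * motzkin_gf + t ^ 2 + t * s + s ^ 2) = 0"
    unfolding X3_motzkin_cube_def cube_denom_def q_def t_def s_def
    by (simp add: eval_nat_numeral algebra_simps)
  then show ?thesis
    using motzkin_gf_equation by (simp add: q_def)
qed

lemma X_motzkin_cube_times_cube_denom: "X_motzkin_cube * cube_denom = fps_X"
proof -
  have "fps_X ^ 2 * (X_motzkin_cube * cube_denom) = fps_X ^ 2 * fps_X"
    using X3_motzkin_cube_times_cube_denom
    by (simp add: X_motzkin_cube_def X3_motzkin_cube_def algebra_simps power_def)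
  then show ?thesis
    by simp
qed

lemma cube_denom_nth_0: "fps_nth cube_denom 0 = 1"
  by (simp add: cube_denom_def numeral_fps_const)

definition a_series :: "real \<Rightarrow> real fps" where
  "a_series k = fps_const (k ^ 2) * X3_motzkin_cube - fps_const (k * (k + 1))"

definition d_series :: "real \<Rightarrow> real fps" where
  "d_series k = fps_const ((k + 1) ^ 2) * cube_denom - fps_const (k * (k + 1)) * fps_X ^ 3"

definition b_series :: "real \<Rightarrow> real fps" where
  "b_series k = fps_X * inverse (d_series k)"

abbreviation hankel_a :: "real \<Rightarrow> nat \<Rightarrow> real" where
  "hankel_a k n \<equiv> det (hankel_mat (fps_nth (a_series k)) n)"

lemma cube_denom_eq_X_motzkin_cube:
  "cube_denom = (1 - 3 * fps_X + 2 * fps_X ^ 3) - fps_X ^ 5 * X_motzkin_cube"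
  by (simp add: cube_denom_def X3_motzkin_cube_def X_motzkin_cube_def algebra_simps power_def)

lemma cube_denom_eq_a_series: "cube_denom = (1 - 3 * fps_X) - fps_X ^ 3 * a_series 1"
  by (simp add: cube_denom_def a_series_def algebra_simps numeral_fps_const)

lemma d_series_eq: "d_series k = fps_const ((k + 1) ^ 2) * (1 - 3 * fps_X) - fps_X ^ 3 * a_series (k + 1)"
proof -
  have "2 * fps_const ((k + 1) ^ 2) - fps_const (k * (k + 1)) - fps_const ((k + 1) * (k + 1 + 1)) = (0 :: real fps)"
    by (simp add: numeral_fps_const algebra_simps power2_eq_square)
  moreover have "d_series k - (fps_const ((k + 1) ^ 2) * (1 - 3 * fps_X) - fps_X ^ 3 * a_series (k + 1))
      = fps_X ^ 3 * (2 * fps_const ((k + 1) ^ 2) - fps_const (k * (k + 1)) - fps_const ((k + 1) * (k + 1 + 1)))"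
    by (simp add: d_series_def a_series_def cube_denom_def algebra_simps del: fps_const_mult fps_const_add fps_const_sub)
  ultimately show ?thesis
    by simp
qed

lemma d_series_nth_0: "fps_nth (d_series k) 0 = (k + 1) ^ 2"
  by (simp add: d_series_def cube_denom_nth_0)

lemma b_series_nth_0: "fps_nth (b_series k) 0 = 0"
  by (simp add: b_series_def)

lemma b_series_times_d_series:
  assumes "k > 0"
  shows "b_series k * d_series k = fps_X"
  using assms d_series_nth_0[of k] by (simp add: b_series_def mult.assoc inverse_mult_eq_1)

lemma a_series_times:
  assumes "k > 0"
  shows "a_series k * (fps_const (- 1 / (k * (k + 1))) - fps_X ^ 2 * b_series k) = 1"
proof -
  define a where "a = fps_const (k ^ 2)"
  define b where "b = fps_const (k * (k + 1))"
  define a' where "a' = fps_const ((k + 1) ^ 2)"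
  define c where "c = fps_const (- 1 / (k * (k + 1)))"
  have "- 1 / (k * (k + 1)) * (k * (k + 1)) = - 1"
    using assms by (simp add: add_pos_pos)
  then have cb: "c * b = -1"
    unfolding c_def b_def by (metis fps_const_mult fps_const_neg fps_const_1_eq_1)
  have aa': "a * a' = b * b"
    by (simp add: a_def a'_def b_def power2_eq_square algebra_simps)
  have a_eq: "a_series k = a * X3_motzkin_cube - b"
    by (simp add: a_series_def a_def b_def)
  have d_eq: "d_series k = a' * cube_denom - b * fps_X ^ 3"
    by (simp add: d_series_def a'_def b_def)
  have d_nonzero: "fps_nth (d_series k) 0 \<noteq> 0"
    using assms by (simp add: d_series_nth_0)
  have "c * d_series k - fps_X ^ 3 = c * a' * cube_denom - (c * b + 1) * fps_X ^ 3"
    by (simp add: d_eq algebra_simps)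
  also have "\<dots> = c * a' * cube_denom"
    by (simp add: cb)
  finally have "a_series k * (c * d_series k - fps_X ^ 3)
      = c * (a * a') * (X3_motzkin_cube * cube_denom) - (c * b) * a' * cube_denom"
    by (simp add: a_eq algebra_simps)
  also have "\<dots> = d_series k"
    by (simp add: X3_motzkin_cube_times_cube_denom aa' mult.assoc[symmetric] cb d_eq)
  finally have "a_series k * (c * d_series k - fps_X ^ 3) = d_series k" .
  moreover have "c - fps_X ^ 2 * b_series k = (c * d_series k - fps_X ^ 3) * inverse (d_series k)"
    using d_nonzero by (simp add: b_series_def algebra_simps power_def inverse_mult_eq_1')
  ultimately show ?thesis
    using d_nonzero by (simp add: c_def mult.assoc[symmetric] inverse_mult_eq_1')
qed

lemma det_hankel_a_series_Suc:
  assumes "k > 0"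
  shows "hankel_a k (Suc n) = (- (k * (k + 1))) ^ (2 * n + 1) * det (hankel_mat (fps_nth (b_series k)) n)"
proof -
  let ?V = "fps_const (- 1 / (k * (k + 1))) - fps_X ^ 2 * b_series k"
  interpret hankel_quadratic_transformation "a_series k" ?V "b_series k" 0
    using assms a_series_times[OF assms] by unfold_locales (auto simp: fps_X_power_mult_nth)
  show ?thesis
    using det_hankel_transformation[of "Suc n"] assms by (simp add: add_pos_pos)
qed

lemma det_hankel_b_series:
  assumes "k > 0"
  shows "det (hankel_mat (fps_nth (b_series k)) (n + 2))
    = - (inverse ((k + 1) ^ 2) ^ (2 * n + 2) * hankel_a (k + 1) n)"
proof -
  interpret hankel_quadratic_transformation "b_series k" "d_series k" "a_series (k + 1)" 1
  proof unfold_locales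
    show "b_series k * d_series k = fps_X ^ 1"
      using b_series_times_d_series[OF assms] by simp
    show "fps_nth (d_series k) 0 \<noteq> 0"
      using assms by (simp add: d_series_nth_0)
    fix j :: nat assume "1 + 2 \<le> j"
    then show "fps_nth (d_series k) j = - fps_nth (a_series (k + 1)) (j - 1 - 2)"
      unfolding d_series_eq by (subst fps_nth_diff_X_power_mult) (auto simp: numeral_fps_const numeral_3_eq_3)
  qed
  have "2 * (n + 2) - 1 - 1 = 2 * n + 2" "n + 2 - 1 - 1 = n" "(1 + 1) * 1 div 2 = (1 :: nat)"
    by simp_all
  then show ?thesis
    using det_hankel_transformation[of "n + 2"] by (simp add: d_series_nth_0)
qed

lemma det_hankel_a_series_step:
  assumes "k > 0"
  shows "hankel_a k (n + 3) * (k + 1) ^ (2 * n) = k ^ (2 * n + 5) * (k + 1) * hankel_a (k + 1) n"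
proof -
  let ?Y = "((k + 1) ^ 2) ^ (2 * n + 2)"
  have e: "Suc (n + 2) = n + 3" "2 * (n + 2) + 1 = 2 * n + 5"
    by simp_all
  have "hankel_a k (n + 3) = (- (k * (k + 1))) ^ (2 * n + 5) * det (hankel_mat (fps_nth (b_series k)) (n + 2))"
    using det_hankel_a_series_Suc[OF assms, of "n + 2"] unfolding e .
  also have "\<dots> = k ^ (2 * n + 5) * (k + 1) ^ (2 * n + 5) * hankel_a (k + 1) n * inverse ((k + 1) ^ 2) ^ (2 * n + 2)"
    unfolding det_hankel_b_series[OF assms] by (simp add: power_minus_odd power_mult_distrib)
  finally have "hankel_a k (n + 3) * (k + 1) ^ (2 * n)
      = k ^ (2 * n + 5) * hankel_a (k + 1) n * ((k + 1) ^ (2 * n + 5) * (k + 1) ^ (2 * n)) * inverse ((k + 1) ^ 2) ^ (2 * n + 2)"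
    by (simp add: ac_simps)
  also have "(k + 1) ^ (2 * n + 5) * (k + 1) ^ (2 * n) = (k + 1) * ?Y"
  proof -
    have "2 * n + 5 + 2 * n = Suc (2 * (2 * n + 2))"
      by simp
    then have "(k + 1) ^ (2 * n + 5) * (k + 1) ^ (2 * n) = (k + 1) ^ Suc (2 * (2 * n + 2))"
      by (simp only: power_add[symmetric])
    then show ?thesis
      by (simp only: power_Suc power_mult)
  qed
  also have "k ^ (2 * n + 5) * hankel_a (k + 1) n * ((k + 1) * ?Y) * inverse ((k + 1) ^ 2) ^ (2 * n + 2)
      = k ^ (2 * n + 5) * (k + 1) * hankel_a (k + 1) n * (?Y * inverse ((k + 1) ^ 2) ^ (2 * n + 2))"
    by (simp only: ac_simps)
  also have "?Y * inverse ((k + 1) ^ 2) ^ (2 * n + 2) = 1"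
  proof -
    have "(k + 1) ^ 2 * inverse ((k + 1) ^ 2) = 1"
      using assms by simp
    then show ?thesis
      by (metis power_mult_distrib power_one)
  qed
  finally show ?thesis
    by simp
qed

lemma det_hankel_a_series_closed_form:
  assumes "k > 0"
  shows "k * hankel_a k (3 * m) = k ^ (6 * m) * (k + m)
    \<and> hankel_a k (3 * m + 1) = - (k ^ (6 * m + 1) * (k + m + 1))
    \<and> hankel_a k (3 * m + 2) = 0"
  using assms
proof (induction m arbitrary: k)
  case 0
  then show ?case
    using det_hankel_a_series_Suc[of k 0] det_hankel_a_series_Suc[of k 1]
    by (simp add: b_series_nth_0 det_hankel_mat_1)
next
  case (Suc m)
  have k: "k > 0" "k + 1 > 0"
    using Suc.prems by simp_all
  note IH = Suc.IH[OF k(2)]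
  have "hankel_a k (3 * m + 3) * (k + 1) ^ (6 * m) = k ^ (6 * m + 5) * ((k + 1) * hankel_a (k + 1) (3 * m))"
    using det_hankel_a_series_step[OF k(1), of "3 * m"] by (simp add: ac_simps)
  also have "\<dots> = (k ^ (6 * m + 5) * (k + 1 + m)) * (k + 1) ^ (6 * m)"
    using IH by simp
  finally have "hankel_a k (3 * m + 3) = k ^ (6 * m + 5) * (k + 1 + m)"
    using k by auto
  then have "k * hankel_a k (3 * Suc m) = (k * k ^ (6 * m + 5)) * (k + Suc m)"
    by (simp add: ac_simps)
  also have "k * k ^ (6 * m + 5) = k ^ (6 * Suc m)"
    by (simp flip: power_Suc)
  finally have case_0: "k * hankel_a k (3 * Suc m) = k ^ (6 * Suc m) * (k + Suc m)" .
  have "hankel_a k (3 * m + 4) * (k + 1) ^ (6 * m + 2) = k ^ (6 * m + 7) * (k + 1) * hankel_a (k + 1) (3 * m + 1)"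
    using det_hankel_a_series_step[OF k(1), of "3 * m + 1"] by (simp add: ac_simps)
  also have "\<dots> = - (k ^ (6 * m + 7) * (k + 1 + m + 1)) * (k + 1) ^ (6 * m + 2)"
    using IH by (simp add: ac_simps)
  finally have "hankel_a k (3 * m + 4) = - (k ^ (6 * m + 7) * (k + 1 + m + 1))"
    by (subst (asm) mult_right_cancel) (use k in auto)
  then have case_1: "hankel_a k (3 * Suc m + 1) = - (k ^ (6 * Suc m + 1) * (k + Suc m + 1))"
    by (simp add: algebra_simps)
  have "hankel_a k (3 * m + 2 + 3) * (k + 1) ^ (2 * (3 * m + 2)) = 0"
    using det_hankel_a_series_step[OF k(1), of "3 * m + 2"] IH by auto
  then have case_2: "hankel_a k (3 * Suc m + 2) = 0"
    using k by auto
  show ?case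
    using case_0 case_1 case_2 by blast
qed

lemma det_hankel_X_motzkin_cube_a_series:
  assumes "2 \<le> n"
  shows "det (hankel_mat (fps_nth X_motzkin_cube) n) = - hankel_a 1 (n - 2)"
proof -
  interpret hankel_quadratic_transformation X_motzkin_cube cube_denom "a_series 1" 1
  proof unfold_locales
    fix j :: nat assume "1 + 2 \<le> j"
    then show "fps_nth cube_denom j = - fps_nth (a_series 1) (j - 1 - 2)"
      unfolding cube_denom_eq_a_series
      by (subst fps_nth_diff_X_power_mult) (auto simp: numeral_fps_const numeral_3_eq_3)
  qed (simp_all add: X_motzkin_cube_times_cube_denom cube_denom_nth_0)
  show ?thesis
    using det_hankel_transformation[of n] assms by (simp add: cube_denom_nth_0 numeral_2_eq_2)
qed

lemma det_hankel_X_motzkin_cube: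
  fixes m :: nat
  shows "det (hankel_mat (fps_nth X_motzkin_cube) (3 * m)) = real m + 1"
    and "det (hankel_mat (fps_nth X_motzkin_cube) (3 * m + 1)) = 0"
    and "det (hankel_mat (fps_nth X_motzkin_cube) (3 * m + 2)) = - (real m + 1)"
proof -
  note a_closed = det_hankel_a_series_closed_form[of 1, simplified]
  show "det (hankel_mat (fps_nth X_motzkin_cube) (3 * m)) = real m + 1"
  proof (cases m)
    case (Suc m')
    then show ?thesis
      using det_hankel_X_motzkin_cube_a_series[of "3 * m"] a_closed[of m'] by simp
  qed simp
  show "det (hankel_mat (fps_nth X_motzkin_cube) (3 * m + 1)) = 0"
  proof (cases m)
    case 0
    then show ?thesis
      by (simp add: X_motzkin_cube_def)
  next
    case (Suc m')
    then show ?thesis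
      using det_hankel_X_motzkin_cube_a_series[of "3 * m + 1"] a_closed[of m'] by simp
  qed
  show "det (hankel_mat (fps_nth X_motzkin_cube) (3 * m + 2)) = - (real m + 1)"
    using det_hankel_X_motzkin_cube_a_series[of "3 * m + 2"] a_closed[of m] by simp
qed

lemma det_hankel_X3_motzkin_cube:
  assumes "4 \<le> n"
  shows "det (hankel_mat (fps_nth X3_motzkin_cube) n) = det (hankel_mat (fps_nth X_motzkin_cube) (n - 4))"
proof -
  interpret hankel_quadratic_transformation X3_motzkin_cube cube_denom X_motzkin_cube 3
  proof unfold_locales
    fix j :: nat assume "3 + 2 \<le> j"
    then show "fps_nth cube_denom j = - fps_nth X_motzkin_cube (j - 3 - 2)"
      unfolding cube_denom_eq_X_motzkin_cube
      by (subst fps_nth_diff_X_power_mult) (auto simp: numeral_fps_const)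
  qed (simp_all add: X3_motzkin_cube_times_cube_denom cube_denom_nth_0)
  show ?thesis
    using det_hankel_transformation[of n] assms by (simp add: cube_denom_nth_0)
qed

lemma hankel_det_motzkin_gf_eq:
  "hankel_det motzkin_gf 3 (-3) n = det (hankel_mat (fps_nth X3_motzkin_cube) n)"
proof -
  have "pow_coeff motzkin_gf 3 (int i + int j + -3) = fps_nth X3_motzkin_cube (i + j)" for i j
  proof (cases "i + j < 3")
    case False
    then have "nat (int i + int j + -3) = i + j - 3"
      by simp
    with False show ?thesis
      by (simp add: pow_coeff_def X3_motzkin_cube_def fps_X_power_mult_nth)
  qed (simp add: pow_coeff_def X3_motzkin_cube_def fps_X_power_mult_nth)
  then show ?thesis
    by (simp add: hankel_det_def hankel_mat_def)
qed

theorem proposition4p2: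
  shows "hankel_det motzkin_gf 3 (-3) 0 = 1
    \<and> hankel_det motzkin_gf 3 (-3) 1 = 0
    \<and> hankel_det motzkin_gf 3 (-3) 2 = 0
    \<and> hankel_det motzkin_gf 3 (-3) 3 = 0
    \<and> (\<forall>k::nat. k \<ge> 1 \<longrightarrow>
          hankel_det motzkin_gf 3 (-3) (3 * k + 1) = real k
        \<and> hankel_det motzkin_gf 3 (-3) (3 * k + 2) = 0
        \<and> hankel_det motzkin_gf 3 (-3) (3 * k + 3) = - real k)"
proof -
  have initial_zero: "hankel_det motzkin_gf 3 (-3) n = 0" if "0 < n" "n \<le> 3" for n
    unfolding hankel_det_motzkin_gf_eq
    by (rule det_hankel_mat_first_row_zero) (use that in \<open>auto simp: X3_motzkin_cube_def fps_X_power_mult_nth\<close>)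
  have reduce_to_X_motzkin_cube: "hankel_det motzkin_gf 3 (-3) (3 * k + r + 1)
      = det (hankel_mat (fps_nth X_motzkin_cube) (3 * (k - 1) + r))" if "1 \<le> k" for k r
    using that by (simp add: hankel_det_motzkin_gf_eq det_hankel_X3_motzkin_cube algebra_simps)
  have periodic: "hankel_det motzkin_gf 3 (-3) (3 * k + 1) = real k
      \<and> hankel_det motzkin_gf 3 (-3) (3 * k + 2) = 0
      \<and> hankel_det motzkin_gf 3 (-3) (3 * k + 3) = - real k" if "1 \<le> k" for k
    using reduce_to_X_motzkin_cube[OF that, of 0] reduce_to_X_motzkin_cube[OF that, of 1] reduce_to_X_motzkin_cube[OF that, of 2] that
      det_hankel_X_motzkin_cube[of "k - 1"] by (simp add: of_nat_diff numeral_3_eq_3)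
  show ?thesis
    using periodic initial_zero[of 1] initial_zero[of 2] initial_zero[of 3] hankel_det_motzkin_gf_eq[of 0] by simp
qed

end
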